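(* For any nontrivial connected graph $G$, $\gamma_t(G)\le \gamma_{qtR}(G)\le 2\gamma_t(G)$. Furthermore: (i) $\gamma_{qtR}(G)=\gamma_t(G)$ if and only if $G\cong P_2$; (ii) $\gamma_{qtR}(G)=\gamma_t(G)+1$ if and only if $\gamma_{qtR}(G)=3$; (iii) $\gamma_{qtR}(G)=2\gamma_t(G)$ if and only if $\gamma_{qtR}(G)=\gamma_{tR}(G)$ and $\gamma_{tR}(G)=2\gamma_t(G)$.
   Context: All graphs are finite, simple and undirected. $\gamma_t(G)$ is the total domination number: the minimum size of a set $S\subseteq V(G)$ such that every vertex of $G$ has a neighbor in $S$. For a function $f:V(G)\to\{0,1,2\}$ write $V_i=\{v: f(v)=i\}$; its weight is $|V_1|+2|V_2|$. A total Roman dominating function (TRDF) is an $f$ in which every vertex labeled $0$ has a neighbor labeled $2$ and the subgraph induced by $V_1\cup V_2$ has no isolated vertices; $\gamma_{tR}(G)$ is the minimum weight of a TRDF. A quasi-total Roman dominating function (QTRDF) is an $f$ such that every vertex labeled $0$ is adjacent to a vertex labeled $2$, and every vertex that is isolated in the subgraph induced by $V_1\cup V_2$ has label $1$; $\gamma_{qtR}(G)$ is the minimum weight of a QTRDF. *)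

theory Defs
  imports Main
begin

definition graph :: "'a set \<Rightarrow> ('a \<Rightarrow> 'a \<Rightarrow> bool) \<Rightarrow> bool" where
  "graph V E \<longleftrightarrow> finite V \<and> (\<forall>x y. E x y \<longrightarrow> x \<in> V \<and> y \<in> V)
     \<and> (\<forall>x y. E x y \<longrightarrow> E y x) \<and> (\<forall>x. \<not> E x x)"

definition connected_graph :: "'a set \<Rightarrow> ('a \<Rightarrow> 'a \<Rightarrow> bool) \<Rightarrow> bool" where
  "connected_graph V E \<longleftrightarrow> (\<forall>x\<in>V. \<forall>y\<in>V. E\<^sup>*\<^sup>* x y)"

definition is_P2 :: "'a set \<Rightarrow> ('a \<Rightarrow> 'a \<Rightarrow> bool) \<Rightarrow> bool" where
  "is_P2 V E \<longleftrightarrow> (\<exists>a b. a \<noteq> b \<and> V = {a, b} \<and> E a b)"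

definition total_dominating_set :: "'a set \<Rightarrow> ('a \<Rightarrow> 'a \<Rightarrow> bool) \<Rightarrow> 'a set \<Rightarrow> bool" where
  "total_dominating_set V E S \<longleftrightarrow> S \<subseteq> V \<and> (\<forall>v\<in>V. \<exists>u\<in>S. E v u)"

definition gamma_t :: "'a set \<Rightarrow> ('a \<Rightarrow> 'a \<Rightarrow> bool) \<Rightarrow> nat" where
  "gamma_t V E = (LEAST k. \<exists>S. total_dominating_set V E S \<and> card S = k)"

definition weight :: "'a set \<Rightarrow> ('a \<Rightarrow> nat) \<Rightarrow> nat" where
  "weight V f = (\<Sum>v\<in>V. f v)"

text \<open>Labelings f : V \<rightarrow> {0,1,2} (values outside V are irrelevant).\<close>
definition TRDF :: "'a set \<Rightarrow> ('a \<Rightarrow> 'a \<Rightarrow> bool) \<Rightarrow> ('a \<Rightarrow> nat) \<Rightarrow> bool" where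
  "TRDF V E f \<longleftrightarrow> (\<forall>v\<in>V. f v \<le> 2)
     \<and> (\<forall>v\<in>V. f v = 0 \<longrightarrow> (\<exists>u. E v u \<and> f u = 2))
     \<and> (\<forall>v\<in>V. f v \<noteq> 0 \<longrightarrow> (\<exists>u. E v u \<and> f u \<noteq> 0))"

definition QTRDF :: "'a set \<Rightarrow> ('a \<Rightarrow> 'a \<Rightarrow> bool) \<Rightarrow> ('a \<Rightarrow> nat) \<Rightarrow> bool" where
  "QTRDF V E f \<longleftrightarrow> (\<forall>v\<in>V. f v \<le> 2)
     \<and> (\<forall>v\<in>V. f v = 0 \<longrightarrow> (\<exists>u. E v u \<and> f u = 2))
     \<and> (\<forall>v\<in>V. f v \<noteq> 0 \<and> \<not> (\<exists>u. E v u \<and> f u \<noteq> 0) \<longrightarrow> f v = 1)"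

definition gamma_tR :: "'a set \<Rightarrow> ('a \<Rightarrow> 'a \<Rightarrow> bool) \<Rightarrow> nat" where
  "gamma_tR V E = (LEAST w. \<exists>f. TRDF V E f \<and> weight V f = w)"

definition gamma_qtR :: "'a set \<Rightarrow> ('a \<Rightarrow> 'a \<Rightarrow> bool) \<Rightarrow> nat" where
  "gamma_qtR V E = (LEAST w. \<exists>f. QTRDF V E f \<and> weight V f = w)"

end

theory Submission
  imports Defs
begin

(* For a QTRDF f write V1, V2 for the vertices labelled 1 and 2.  Every vertex outside V1 \<union> V2
   has a neighbour in V2, and every vertex of V2 has a neighbour in V1 \<union> V2.  A set D in which
   every outside vertex has a neighbour that is not isolated in D becomes a total dominating set of
   at most the same size once each vertex isolated in D is traded for one of its neighbours; hence
   gamma_t \<le> |V1 \<union> V2| = w(f) - |V2|.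
   For a vertex x let B be the set of vertices at distance at least 2 from x.  If B is nonempty,
   pick b \<in> B adjacent to a neighbour t of x; then {x, t} \<union> (B - {b}) dominates in the above
   sense, so gamma_t \<le> max 2 (|B| + 1).  Taking x with two neighbours gives gamma_t < |V| when
   |V| \<ge> 3.
   For a minimum f, gamma_qtR = gamma_t forces V2 = {}, so f is constantly 1 and gamma_t = |V|,
   leaving only P2.  If gamma_qtR = gamma_t + 1 there is a minimum f with V2 = {x} (when V2 = {},
   relabel a vertex with two neighbours by 2 and one of these neighbours by 0).  All vertices of B
   are then labelled positively, so w(f) \<ge> |B| + 3, which together with the bound above forces
   gamma_t = 2. *)

lemma rtranclp_enters_set:
  assumes "E\<^sup>*\<^sup>* a b" "a \<notin> C" "b \<in> C"
  shows "\<exists>u v. u \<notin> C \<and> v \<in> C \<and> E u v"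
  using assms by (induction rule: rtranclp_induct) auto

lemma weight_eq_card_nonzero_plus_card_two:
  assumes "finite V" "\<And>v. v \<in> V \<Longrightarrow> f v \<le> 2"
  shows "weight V f = card {v\<in>V. f v \<noteq> 0} + card {v\<in>V. f v = 2}"
proof -
  have "f v = (if f v \<noteq> 0 then 1 else 0) + (if f v = 2 then 1 else 0)" if "v \<in> V" for v
    using assms(2)[OF that] by (auto simp: le_Suc_eq numeral_2_eq_2)
  then have "weight V f = (\<Sum>v\<in>V. (if f v \<noteq> 0 then 1 else 0) + (if f v = 2 then 1 else 0))"
    unfolding weight_def by (rule sum.cong[OF refl])
  also have "\<dots> = card {v\<in>V. f v \<noteq> 0} + card {v\<in>V. f v = 2}"
    using assms(1) by (simp add: sum.distrib sum.If_cases Int_def)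
  finally show ?thesis .
qed

lemma QTRDF_le_2: "QTRDF V E f \<Longrightarrow> v \<in> V \<Longrightarrow> f v \<le> 2"
  unfolding QTRDF_def by blast

lemma QTRDF_zeroD: "QTRDF V E f \<Longrightarrow> v \<in> V \<Longrightarrow> f v = 0 \<Longrightarrow> \<exists>u. E v u \<and> f u = 2"
  unfolding QTRDF_def by blast

lemma QTRDF_twoD: "QTRDF V E f \<Longrightarrow> v \<in> V \<Longrightarrow> f v = 2 \<Longrightarrow> \<exists>u. E v u \<and> f u \<noteq> 0"
  unfolding QTRDF_def by force

lemma QTRDF_if_TRDF: "TRDF V E f \<Longrightarrow> QTRDF V E f"
  unfolding TRDF_def QTRDF_def by blast

locale simple_graph =
  fixes V :: "'a set" and E :: "'a \<Rightarrow> 'a \<Rightarrow> bool"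
  assumes graph: "graph V E"
begin

lemma finite_V: "finite V"
  using graph unfolding graph_def by blast

lemma adj_in_V:
  assumes "E x y"
  shows "x \<in> V" "y \<in> V"
  using graph assms unfolding graph_def by blast+

lemma adj_sym: "E x y \<Longrightarrow> E y x"
  using graph unfolding graph_def by blast

lemma adj_irrefl: "\<not> E x x"
  using graph unfolding graph_def by blast

lemma weight_QTRDF:
  "QTRDF V E f \<Longrightarrow> weight V f = card {v\<in>V. f v \<noteq> 0} + card {v\<in>V. f v = 2}"
  by (rule weight_eq_card_nonzero_plus_card_two[OF finite_V QTRDF_le_2])

lemma QTRDF_const_1: "QTRDF V E (\<lambda>_. 1)"
  unfolding QTRDF_def by simp

lemma gamma_qtR_le: "QTRDF V E f \<Longrightarrow> gamma_qtR V E \<le> weight V f"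
  unfolding gamma_qtR_def by (rule Least_le) blast

lemma gamma_qtR_attained: "\<exists>f. QTRDF V E f \<and> weight V f = gamma_qtR V E"
  unfolding gamma_qtR_def by (rule LeastI_ex) (use QTRDF_const_1 in blast)

lemma gamma_qtR_le_card: "gamma_qtR V E \<le> card V"
  using gamma_qtR_le[OF QTRDF_const_1] by (simp add: weight_def)

lemma weight_QTRDF_without_two:
  assumes f: "QTRDF V E f" and no_two: "{v\<in>V. f v = 2} = {}"
  shows "weight V f = card V"
proof -
  have "f v \<noteq> 0" if v: "v \<in> V" for v
  proof
    assume "f v = 0"
    then obtain u where u: "E v u" "f u = 2" using QTRDF_zeroD[OF f v] by blast
    then show False using no_two adj_in_V(2)[OF u(1)] by blast
  qed
  then have "{v\<in>V. f v \<noteq> 0} = V" by blast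
  then show ?thesis using weight_QTRDF[OF f] no_two by simp
qed

lemma weight_QTRDF_single_two_ge:
  assumes f: "QTRDF V E f" and two: "{v\<in>V. f v = 2} = {x}"
  shows "card (V - insert x {v. E x v}) + 3 \<le> weight V f"
proof -
  let ?B = "V - insert x {v. E x v}"
  have x: "x \<in> V" "f x = 2" using two by auto
  then obtain y where y: "E x y" "f y \<noteq> 0" using QTRDF_twoD[OF f] by blast
  have "y \<in> V" "y \<noteq> x" using adj_in_V(2)[OF y(1)] y(1) adj_irrefl by auto
  have "f v \<noteq> 0" if v: "v \<in> ?B" for v
  proof
    assume "f v = 0"
    then obtain u where u: "E v u" "f u = 2" using QTRDF_zeroD[OF f] v by blast
    then have "u = x" using two adj_in_V(2)[OF u(1)] by blast
    then show False using v adj_sym[OF u(1)] by blast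
  qed
  then have "?B \<union> {x, y} \<subseteq> {v\<in>V. f v \<noteq> 0}" using x y(2) \<open>y \<in> V\<close> by auto
  then have "card (?B \<union> {x, y}) \<le> card {v\<in>V. f v \<noteq> 0}"
    using finite_V by (intro card_mono) auto
  moreover have "card (?B \<union> {x, y}) = card ?B + card {x, y}"
    using y(1) finite_V by (intro card_Un_disjoint) auto
  moreover have "card {x, y} = 2" using \<open>y \<noteq> x\<close> by simp
  ultimately show ?thesis using weight_QTRDF[OF f] two by simp
qed

lemma ex_QTRDF_weight_card_single_two:
  assumes "E x y" "E x z" "y \<noteq> z"
  shows "\<exists>f. QTRDF V E f \<and> weight V f = card V \<and> {v\<in>V. f v = 2} = {x}"
proof -
  define f where "f v = (if v = x then 2 else if v = z then 0 else 1::nat)" for v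
  have "x \<noteq> y" "x \<noteq> z" using assms adj_irrefl by blast+
  have "x \<in> V" "z \<in> V" using adj_in_V[OF assms(2)] by blast+
  have f: "QTRDF V E f"
    unfolding QTRDF_def
  proof (intro conjI ballI impI)
    fix v assume "v \<in> V"
    show "f v \<le> 2" unfolding f_def by simp
  next
    fix v assume "v \<in> V" "f v = 0"
    then have "v = z" unfolding f_def by (auto split: if_splits)
    then show "\<exists>u. E v u \<and> f u = 2" using adj_sym[OF assms(2)] unfolding f_def by auto
  next
    fix v assume v: "v \<in> V" "f v \<noteq> 0 \<and> \<not> (\<exists>u. E v u \<and> f u \<noteq> 0)"
    have "f y \<noteq> 0" using \<open>x \<noteq> y\<close> assms(3) unfolding f_def by auto
    then have "v \<noteq> x" using v assms(1) by blast
    then show "f v = 1" using v unfolding f_def by auto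
  qed
  have "{v\<in>V. f v \<noteq> 0} = V - {z}" and two: "{v\<in>V. f v = 2} = {x}"
    unfolding f_def using \<open>x \<noteq> z\<close> \<open>x \<in> V\<close> by auto
  then have "weight V f = Suc (card (V - {z}))" using weight_QTRDF[OF f] by simp
  also have "\<dots> = card V" using card_Suc_Diff1[OF finite_V \<open>z \<in> V\<close>] .
  finally show ?thesis using f two by blast
qed

end

locale graph_without_isolated = simple_graph +
  assumes has_neighbour: "v \<in> V \<Longrightarrow> \<exists>u. E v u"
begin

lemma total_dominating_set_V: "total_dominating_set V E V"
  unfolding total_dominating_set_def using has_neighbour adj_in_V(2) by blast

lemma gamma_t_le: "total_dominating_set V E S \<Longrightarrow> gamma_t V E \<le> card S"
  unfolding gamma_t_def by (rule Least_le) blast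

lemma gamma_t_attained: "\<exists>S. total_dominating_set V E S \<and> card S = gamma_t V E"
  unfolding gamma_t_def by (rule LeastI_ex) (use total_dominating_set_V in blast)

lemma card_total_dominating_set_ge_2:
  assumes "V \<noteq> {}" and S: "total_dominating_set V E S"
  shows "2 \<le> card S"
proof -
  obtain a where "a \<in> V" using assms(1) by blast
  then obtain u where u: "u \<in> S" "E a u" using S unfolding total_dominating_set_def by blast
  then obtain w where w: "w \<in> S" "E u w"
    using S adj_in_V(2)[OF u(2)] unfolding total_dominating_set_def by blast
  have "finite S" using S finite_V finite_subset unfolding total_dominating_set_def by blast
  then have "card {u, w} \<le> card S" using u w by (intro card_mono) auto
  then show ?thesis using w(2) adj_irrefl by (cases "u = w") auto
qed

lemma gamma_t_ge_2: "V \<noteq> {} \<Longrightarrow> 2 \<le> gamma_t V E"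
  using gamma_t_attained card_total_dominating_set_ge_2 by metis

lemma gamma_t_le_card_dominating_non_isolated:
  assumes "D \<subseteq> V" and dom: "\<And>v. v \<in> V - D \<Longrightarrow> \<exists>u\<in>D. E v u \<and> (\<exists>w\<in>D. E u w)"
  shows "gamma_t V E \<le> card D"
proof -
  obtain g where g: "\<forall>v\<in>V. E v (g v)" using has_neighbour by metis
  define h where "h u = (if \<exists>w\<in>D. E u w then u else g u)" for u
  have "total_dominating_set V E (h ` D)"
    unfolding total_dominating_set_def
  proof (intro conjI ballI)
    show "h ` D \<subseteq> V" using assms(1) g adj_in_V(2) unfolding h_def by auto
    fix v assume v: "v \<in> V"
    show "\<exists>s\<in>h ` D. E v s"
    proof (cases "v \<in> D")
      case False
      then obtain u where "u \<in> D" "E v u" "\<exists>w\<in>D. E u w" using dom v by blast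
      then show ?thesis unfolding h_def by force
    next
      case True
      show ?thesis
      proof (cases "\<exists>w\<in>D. E v w")
        case True
        then obtain w where "w \<in> D" "E v w" "E w v" using adj_sym by blast
        then show ?thesis using \<open>v \<in> D\<close> unfolding h_def by force
      next
        case False
        then show ?thesis using \<open>v \<in> D\<close> g v unfolding h_def by force
      qed
    qed
  qed
  then have "gamma_t V E \<le> card (h ` D)" by (rule gamma_t_le)
  also have "\<dots> \<le> card D" using finite_subset[OF assms(1) finite_V] by (rule card_image_le)
  finally show ?thesis .
qed

lemma gamma_t_le_card_nonzero:
  assumes f: "QTRDF V E f"
  shows "gamma_t V E \<le> card {v\<in>V. f v \<noteq> 0}"
proof (rule gamma_t_le_card_dominating_non_isolated)
  fix v assume "v \<in> V - {v\<in>V. f v \<noteq> 0}"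
  then obtain u where u: "E v u" "f u = 2" using QTRDF_zeroD[OF f] by blast
  then obtain w where w: "E u w" "f w \<noteq> 0" using QTRDF_twoD[OF f adj_in_V(2)[OF u(1)]] by blast
  show "\<exists>u\<in>{v\<in>V. f v \<noteq> 0}. E v u \<and> (\<exists>w\<in>{v\<in>V. f v \<noteq> 0}. E u w)"
    using u w adj_in_V(2)[OF u(1)] adj_in_V(2)[OF w(1)] by auto
qed auto

lemma gamma_t_le_gamma_qtR: "gamma_t V E \<le> gamma_qtR V E"
  using gamma_qtR_attained weight_QTRDF gamma_t_le_card_nonzero by (metis trans_le_add1)

lemma TRDF_const_1: "TRDF V E (\<lambda>_. 1)"
  unfolding TRDF_def using has_neighbour by auto

lemma gamma_tR_le: "TRDF V E f \<Longrightarrow> gamma_tR V E \<le> weight V f"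
  unfolding gamma_tR_def by (rule Least_le) blast

lemma gamma_tR_attained: "\<exists>f. TRDF V E f \<and> weight V f = gamma_tR V E"
  unfolding gamma_tR_def by (rule LeastI_ex) (use TRDF_const_1 in blast)

lemma gamma_qtR_le_gamma_tR: "gamma_qtR V E \<le> gamma_tR V E"
  using gamma_tR_attained gamma_qtR_le QTRDF_if_TRDF by metis

lemma gamma_tR_le_2_gamma_t: "gamma_tR V E \<le> 2 * gamma_t V E"
proof -
  obtain S where S: "total_dominating_set V E S" "card S = gamma_t V E"
    using gamma_t_attained by blast
  define f where "f v = (if v \<in> S then 2 else 0::nat)" for v
  have "TRDF V E f"
    using S(1) unfolding TRDF_def total_dominating_set_def f_def by auto
  moreover have "weight V f = 2 * card S"
    using S(1) finite_V unfolding weight_def f_def total_dominating_set_def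
    by (simp add: sum.If_cases Int_absorb1)
  ultimately show ?thesis using gamma_tR_le S(2) by metis
qed

end

locale nontrivial_connected_graph = simple_graph +
  assumes connected: "connected_graph V E" and card_ge_2: "card V \<ge> 2"
begin

lemma connected_rtranclp: "x \<in> V \<Longrightarrow> y \<in> V \<Longrightarrow> E\<^sup>*\<^sup>* x y"
  using connected unfolding connected_graph_def by blast

lemma edge_into_set:
  assumes "a \<in> V" "b \<in> V" "a \<notin> C" "b \<in> C"
  obtains u v where "u \<in> V" "u \<notin> C" "v \<in> C" "E u v"
proof -
  obtain u v where uv: "u \<notin> C" "v \<in> C" "E u v"
    using rtranclp_enters_set[OF connected_rtranclp[OF assms(1,2)] assms(3,4)] by blast
  show thesis using that[OF adj_in_V(1)[OF uv(3)] uv] .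
qed

lemma V_subset_closed_set:
  assumes "a \<in> V" "a \<in> C" and closed: "\<And>u v. u \<in> C \<Longrightarrow> E u v \<Longrightarrow> v \<in> C"
  shows "V \<subseteq> C"
proof
  fix w assume "w \<in> V"
  show "w \<in> C"
  proof (rule ccontr)
    assume "w \<notin> C"
    then obtain u v where "u \<notin> C" "v \<in> C" "E u v"
      using edge_into_set[OF \<open>w \<in> V\<close> assms(1) _ assms(2)] by blast
    then show False using closed[OF \<open>v \<in> C\<close> adj_sym[OF \<open>E u v\<close>]] by blast
  qed
qed

lemma card_le_2_if_subset_pair: "V \<subseteq> {a, b} \<Longrightarrow> card V \<le> 2"
  using card_mono[of "{a, b}" V] by (simp add: card_insert_if split: if_splits)

sublocale graph_without_isolated
proof
  fix v assume v: "v \<in> V"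
  show "\<exists>u. E v u"
  proof (rule ccontr)
    assume "\<nexists>u. E v u"
    then have "V \<subseteq> {v}" using V_subset_closed_set[of v "{v}"] v by blast
    then have "card V \<le> 1" using card_mono[of "{v}" V] by simp
    then show False using card_ge_2 by simp
  qed
qed

lemma V_nonempty: "V \<noteq> {}"
  using card_ge_2 by auto

lemma ex_vertex_with_two_neighbours:
  assumes "card V \<ge> 3"
  obtains x y z where "E x y" "E x z" "y \<noteq> z"
proof (rule ccontr)
  assume "\<not> thesis"
  then have no_branch: "\<And>x y z. E x y \<Longrightarrow> E x z \<Longrightarrow> y = z" using that by blast
  obtain a where a: "a \<in> V" using V_nonempty by blast
  then obtain b where b: "E a b" using has_neighbour by blast
  have "V \<subseteq> {a, b}"
  proof (rule V_subset_closed_set)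
    show "a \<in> V" "a \<in> {a, b}" by (fact a) simp
    show "v \<in> {a, b}" if "u \<in> {a, b}" "E u v" for u v
      using that b adj_sym[OF b] no_branch by blast
  qed
  then show False using card_le_2_if_subset_pair[of a b] assms by linarith
qed

lemma gamma_t_le_card_non_neighbours:
  assumes x: "x \<in> V"
  shows "gamma_t V E \<le> max 2 (card (V - insert x {v. E x v}) + 1)"
proof (cases "V - insert x {v. E x v} = {}")
  case True
  obtain y where y: "E x y" using has_neighbour x by blast
  have "\<exists>u\<in>{x, y}. E v u \<and> (\<exists>w\<in>{x, y}. E u w)" if "v \<in> V - {x, y}" for v
    using True that y adj_sym by blast
  then have "gamma_t V E \<le> card {x, y}"
    using x adj_in_V(2)[OF y] by (intro gamma_t_le_card_dominating_non_isolated) auto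
  also have "\<dots> \<le> 2" by (simp add: card_insert_if)
  finally show ?thesis by simp
next
  case False
  let ?B = "V - insert x {v. E x v}"
  obtain b0 where "b0 \<in> ?B" using False by blast
  then obtain b t where b: "b \<in> V" "b \<notin> insert x {v. E x v}"
    and t: "t \<in> insert x {v. E x v}" "E b t"
    using edge_into_set[of b0 x "insert x {v. E x v}"] x by blast
  then have "b \<in> ?B" and "E x t" using adj_sym by auto
  let ?D = "insert x (insert t (?B - {b}))"
  have "\<exists>u\<in>?D. E v u \<and> (\<exists>w\<in>?D. E u w)" if v: "v \<in> V - ?D" for v
  proof (cases "E x v")
    case True
    then show ?thesis using \<open>E x t\<close> adj_sym by blast
  next
    case False
    then have "v = b" using v by blast
    then show ?thesis using \<open>E x t\<close> t(2) adj_sym by blast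
  qed
  then have "gamma_t V E \<le> card ?D"
    using x adj_in_V(2)[OF \<open>E x t\<close>] by (intro gamma_t_le_card_dominating_non_isolated) auto
  also have "\<dots> \<le> card (?B - {b}) + 2"
    using finite_V by (simp add: card_insert_if)
  also have "\<dots> = card ?B + 1"
    using card_Suc_Diff1[of ?B b] finite_V \<open>b \<in> ?B\<close> by simp
  finally show ?thesis by simp
qed

lemma gamma_t_less_card:
  assumes "card V \<ge> 3"
  shows "gamma_t V E < card V"
proof -
  obtain x y z where xyz: "E x y" "E x z" "y \<noteq> z" using ex_vertex_with_two_neighbours assms by blast
  then have "card {x, y, z} = 3" "{x, y, z} \<subseteq> V"
    using adj_irrefl adj_in_V[OF xyz(1)] adj_in_V(2)[OF xyz(2)] by (auto simp: card_insert_if)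
  have "V - insert x {v. E x v} \<subseteq> V - {x, y, z}" using xyz by blast
  then have "card (V - insert x {v. E x v}) \<le> card (V - {x, y, z})"
    using finite_V by (intro card_mono) auto
  also have "\<dots> = card V - 3"
    using \<open>card {x, y, z} = 3\<close> \<open>{x, y, z} \<subseteq> V\<close> finite_V by (simp add: card_Diff_subset)
  finally have "card (V - insert x {v. E x v}) + 1 \<le> card V - 2" using assms by linarith
  then have "gamma_t V E \<le> max 2 (card V - 2)"
    using gamma_t_le_card_non_neighbours[OF adj_in_V(1)[OF xyz(1)]] max.mono le_trans by blast
  then show ?thesis using assms by (auto simp: max_def split: if_splits)
qed

lemma is_P2_iff_card_2: "is_P2 V E \<longleftrightarrow> card V = 2"
proof
  assume "card V = 2"
  then obtain a b where ab: "V = {a, b}" "a \<noteq> b" by (meson card_2_iff)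
  then obtain u where u: "E a u" using has_neighbour by blast
  then have "u = b" using ab adj_in_V(2)[OF u] adj_irrefl by blast
  then show "is_P2 V E" unfolding is_P2_def using ab u by blast
qed (auto simp: is_P2_def)

lemma card_2_if_gamma_qtR_eq_gamma_t:
  assumes eq: "gamma_qtR V E = gamma_t V E"
  shows "card V = 2"
proof -
  obtain f where f: "QTRDF V E f" "weight V f = gamma_qtR V E"
    using gamma_qtR_attained by blast
  have "card {v\<in>V. f v = 2} = 0"
    using weight_QTRDF[OF f(1)] gamma_t_le_card_nonzero[OF f(1)] f(2) eq by linarith
  then have "{v\<in>V. f v = 2} = {}" using finite_V by simp
  then have "gamma_t V E = card V" using weight_QTRDF_without_two f eq by simp
  then have "\<not> card V \<ge> 3" using gamma_t_less_card by fastforce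
  then show ?thesis using card_ge_2 by linarith
qed

lemma gamma_qtR_eq_gamma_t_iff_P2: "gamma_qtR V E = gamma_t V E \<longleftrightarrow> is_P2 V E"
proof
  assume "gamma_qtR V E = gamma_t V E"
  then show "is_P2 V E" using card_2_if_gamma_qtR_eq_gamma_t is_P2_iff_card_2 by blast
next
  assume "is_P2 V E"
  then have "card V = 2" using is_P2_iff_card_2 by blast
  then show "gamma_qtR V E = gamma_t V E"
    using gamma_qtR_le_card gamma_t_le_gamma_qtR gamma_t_ge_2[OF V_nonempty] by linarith
qed

lemma obtain_minimum_QTRDF_single_two:
  assumes eq: "gamma_qtR V E = gamma_t V E + 1"
  obtains f x where "QTRDF V E f" "weight V f = gamma_qtR V E" "{v\<in>V. f v = 2} = {x}"
proof -
  obtain f where f: "QTRDF V E f" "weight V f = gamma_qtR V E"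
    using gamma_qtR_attained by blast
  have "card {v\<in>V. f v = 2} \<le> 1"
    using weight_QTRDF[OF f(1)] gamma_t_le_card_nonzero[OF f(1)] f(2) eq by linarith
  then consider "card {v\<in>V. f v = 2} = 0" | "card {v\<in>V. f v = 2} = 1" by linarith
  then show thesis
  proof cases
    case 1
    then have "{v\<in>V. f v = 2} = {}" using finite_V by simp
    then have "gamma_qtR V E = card V" using weight_QTRDF_without_two f by simp
    then have "card V \<ge> 3" using eq gamma_t_ge_2[OF V_nonempty] by linarith
    then obtain x y z where "E x y" "E x z" "y \<noteq> z" by (rule ex_vertex_with_two_neighbours)
    then show thesis
      using ex_QTRDF_weight_card_single_two that \<open>gamma_qtR V E = card V\<close> by metis
  next
    case 2
    then obtain x where "{v\<in>V. f v = 2} = {x}" by (rule card_1_singletonE)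
    then show thesis using that f by blast
  qed
qed

lemma gamma_qtR_eq_gamma_t_plus_1_iff: "gamma_qtR V E = gamma_t V E + 1 \<longleftrightarrow> gamma_qtR V E = 3"
proof
  assume eq: "gamma_qtR V E = gamma_t V E + 1"
  then obtain f x where f: "QTRDF V E f" "weight V f = gamma_qtR V E" "{v\<in>V. f v = 2} = {x}"
    by (rule obtain_minimum_QTRDF_single_two)
  then have "x \<in> V" by blast
  have "card (V - insert x {v. E x v}) + 2 \<le> gamma_t V E"
    using weight_QTRDF_single_two_ge[OF f(1,3)] f(2) eq by linarith
  then have "gamma_t V E \<le> 2"
    using gamma_t_le_card_non_neighbours[OF \<open>x \<in> V\<close>] by (simp add: max_def split: if_splits)
  then show "gamma_qtR V E = 3" using gamma_t_ge_2[OF V_nonempty] eq by linarith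
next
  assume three: "gamma_qtR V E = 3"
  then have "card V \<noteq> 2" using gamma_qtR_le_card by auto
  then have "gamma_qtR V E \<noteq> gamma_t V E" using card_2_if_gamma_qtR_eq_gamma_t by blast
  then show "gamma_qtR V E = gamma_t V E + 1"
    using three gamma_t_le_gamma_qtR gamma_t_ge_2[OF V_nonempty] by linarith
qed

end

theorem mainTheorem2:
  fixes V :: "'a set" and E :: "'a \<Rightarrow> 'a \<Rightarrow> bool"
  assumes "graph V E" and "connected_graph V E" and "card V \<ge> 2"
  shows "gamma_t V E \<le> gamma_qtR V E \<and> gamma_qtR V E \<le> 2 * gamma_t V E
    \<and> (gamma_qtR V E = gamma_t V E \<longleftrightarrow> is_P2 V E)
    \<and> (gamma_qtR V E = gamma_t V E + 1 \<longleftrightarrow> gamma_qtR V E = 3)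
    \<and> (gamma_qtR V E = 2 * gamma_t V E \<longleftrightarrow>
         gamma_qtR V E = gamma_tR V E \<and> gamma_tR V E = 2 * gamma_t V E)"
proof -
  interpret nontrivial_connected_graph V E
    using assms by unfold_locales
  have le: "gamma_qtR V E \<le> gamma_tR V E" "gamma_tR V E \<le> 2 * gamma_t V E"
    by (fact gamma_qtR_le_gamma_tR gamma_tR_le_2_gamma_t)+
  then have "gamma_qtR V E = 2 * gamma_t V E \<longleftrightarrow>
      gamma_qtR V E = gamma_tR V E \<and> gamma_tR V E = 2 * gamma_t V E"
    by auto
  with le gamma_t_le_gamma_qtR gamma_qtR_eq_gamma_t_iff_P2 gamma_qtR_eq_gamma_t_plus_1_iff
  show ?thesis by linarith
qed

end
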